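(* Let $T$ be a finite tree and let $P=p_0p_1\dots p_k$ ($k\ge1$) be a path in $T$ such that each of $p_1,\dots,p_{k-1}$ has degree $2$ in $T$. Let $B$ be the vertex set of the component containing $p_k$ of the graph obtained from $T$ by deleting the edges of $P$, and let $T[B\cup P]$ denote the subgraph of $T$ induced by $B\cup\{p_0,\dots,p_k\}$. If $k$ is even, then for every $\ell\ge1$, \[\omega_{\ell}(p_0,T[B\cup P])-\omega_{\ell}(p_0,P)\leq \omega_{\ell}(p_k,T[B\cup P])-\omega_{\ell}(p_k,P).\]
   Context: For a graph $G$, a vertex $x$ of $G$ and $\ell\ge1$, $\omega_\ell(x,G)$ denotes the number of walks of length $\ell$ in $G$ starting at $x$ (a walk of length $\ell$ being a sequence of vertices $x=v_0,v_1,\dots,v_\ell$ with $v_{i-1}v_i\in E(G)$). Here $P$ is regarded as a graph (the path). *)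

theory Defs
  imports Main
begin

definition simple_graph :: "'a set \<Rightarrow> ('a \<Rightarrow> 'a \<Rightarrow> bool) \<Rightarrow> bool" where
  "simple_graph V E \<longleftrightarrow> finite V \<and> (\<forall>x y. E x y \<longrightarrow> x \<in> V \<and> y \<in> V)
     \<and> (\<forall>x y. E x y \<longrightarrow> E y x) \<and> (\<forall>x. \<not> E x x)"

definition is_walk :: "('a \<Rightarrow> 'a \<Rightarrow> bool) \<Rightarrow> 'a list \<Rightarrow> bool" where
  "is_walk E ws \<longleftrightarrow> ws \<noteq> [] \<and> (\<forall>i. Suc i < length ws \<longrightarrow> E (ws ! i) (ws ! Suc i))"

definition connected_graph :: "'a set \<Rightarrow> ('a \<Rightarrow> 'a \<Rightarrow> bool) \<Rightarrow> bool" where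
  "connected_graph V E \<longleftrightarrow> V \<noteq> {} \<and>
     (\<forall>x\<in>V. \<forall>y\<in>V. \<exists>ws. is_walk E ws \<and> hd ws = x \<and> last ws = y)"

definition is_cycle :: "('a \<Rightarrow> 'a \<Rightarrow> bool) \<Rightarrow> 'a list \<Rightarrow> bool" where
  "is_cycle E cs \<longleftrightarrow> length cs \<ge> 3 \<and> distinct cs \<and> is_walk E cs \<and> E (last cs) (hd cs)"

definition is_tree :: "'a set \<Rightarrow> ('a \<Rightarrow> 'a \<Rightarrow> bool) \<Rightarrow> bool" where
  "is_tree V E \<longleftrightarrow> simple_graph V E \<and> connected_graph V E \<and> (\<nexists>cs. is_cycle E cs)"

definition is_path :: "('a \<Rightarrow> 'a \<Rightarrow> bool) \<Rightarrow> 'a list \<Rightarrow> bool" where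
  "is_path E ps \<longleftrightarrow> is_walk E ps \<and> distinct ps"

definition degree :: "('a \<Rightarrow> 'a \<Rightarrow> bool) \<Rightarrow> 'a \<Rightarrow> nat" where
  "degree E x = card {y. E x y}"

definition path_edges :: "'a list \<Rightarrow> 'a \<Rightarrow> 'a \<Rightarrow> bool" where
  "path_edges ps x y \<longleftrightarrow> (\<exists>i. Suc i < length ps \<and>
      ((x = ps ! i \<and> y = ps ! Suc i) \<or> (y = ps ! i \<and> x = ps ! Suc i)))"

definition delete_path_edges :: "('a \<Rightarrow> 'a \<Rightarrow> bool) \<Rightarrow> 'a list \<Rightarrow> 'a \<Rightarrow> 'a \<Rightarrow> bool" where
  "delete_path_edges E ps x y \<longleftrightarrow> E x y \<and> \<not> path_edges ps x y"

definition component :: "'a set \<Rightarrow> ('a \<Rightarrow> 'a \<Rightarrow> bool) \<Rightarrow> 'a \<Rightarrow> 'a set" where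
  "component V E v = {u \<in> V. \<exists>ws. is_walk E ws \<and> hd ws = v \<and> last ws = u}"

definition induced :: "('a \<Rightarrow> 'a \<Rightarrow> bool) \<Rightarrow> 'a set \<Rightarrow> 'a \<Rightarrow> 'a \<Rightarrow> bool" where
  "induced E S x y \<longleftrightarrow> E x y \<and> x \<in> S \<and> y \<in> S"

definition walks_count :: "('a \<Rightarrow> 'a \<Rightarrow> bool) \<Rightarrow> 'a \<Rightarrow> nat \<Rightarrow> nat" where
  "walks_count E x l = card {ws. length ws = Suc l \<and> hd ws = x \<and> is_walk E ws}"

end

theory Submission imports Defs begin

text \<open>For each vertex x, the difference of walk counts in the statement counts the walks of
  length l from x in T[B \<union> P] that are not walks of P. Such a walk from p_0 can leave the path
  only at p_k: the inner vertices have degree 2, and any further neighbour of p_0 in B \<union> P would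
  close a cycle. So it passes the middle vertex p_{k/2} before its first step off the path, and
  mirroring the part before its first visit of p_{k/2} (p_i \<mapsto> p_{k-i}) maps these walks
  injectively to the walks from p_k that are not walks of P.\<close>

definition walks :: "('a \<Rightarrow> 'a \<Rightarrow> bool) \<Rightarrow> 'a \<Rightarrow> nat \<Rightarrow> 'a list set" where
  "walks R x l = {ws. length ws = Suc l \<and> hd ws = x \<and> is_walk R ws}"

lemma walks_count_eq_card_walks: "walks_count R x l = card (walks R x l)"
  unfolding walks_count_def walks_def ..

lemma walks_start: "ws \<in> walks R x l \<Longrightarrow> ws \<noteq> [] \<and> ws ! 0 = x"
  unfolding walks_def by (cases ws) auto

lemma is_walk_mono: "is_walk R ws \<Longrightarrow> (\<And>a b. R a b \<Longrightarrow> R' a b) \<Longrightarrow> is_walk R' ws"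
  unfolding is_walk_def by blast

lemma walks_mono: "(\<And>a b. R a b \<Longrightarrow> R' a b) \<Longrightarrow> walks R x l \<subseteq> walks R' x l"
  unfolding walks_def using is_walk_mono by blast

lemma walk_set_subset:
  assumes "is_walk R ws" "\<And>a b. R a b \<Longrightarrow> b \<in> V"
  shows "set ws \<subseteq> insert (hd ws) V"
proof
  fix x assume "x \<in> set ws"
  then obtain i where i: "i < length ws" "ws ! i = x" by (auto simp: in_set_conv_nth)
  show "x \<in> insert (hd ws) V"
  proof (cases i)
    case 0 then show ?thesis using i assms(1) by (simp add: hd_conv_nth is_walk_def)
  next
    case (Suc j) then show ?thesis using assms i unfolding is_walk_def by auto
  qed
qed

lemma finite_walks:
  assumes "finite V" "\<And>a b. R a b \<Longrightarrow> b \<in> V"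
  shows "finite (walks R x l)"
proof (rule finite_subset)
  show "walks R x l \<subseteq> {ws. set ws \<subseteq> insert x V \<and> length ws = Suc l}"
    using walk_set_subset[of R _ V] assms(2) unfolding walks_def by blast
  show "finite {ws. set ws \<subseteq> insert x V \<and> length ws = Suc l}"
    using assms(1) by (intro finite_lists_length_eq) auto
qed

lemma first_step_outside:
  assumes "ws \<noteq> []" "\<not> is_walk R ws"
  obtains t where "Suc t < length ws" "\<not> R (ws ! t) (ws ! Suc t)"
    "\<And>n. n < t \<Longrightarrow> R (ws ! n) (ws ! Suc n)"
proof -
  have "\<exists>t. Suc t < length ws \<and> \<not> R (ws ! t) (ws ! Suc t)"
    using assms unfolding is_walk_def by auto
  from exists_least_iff[THEN iffD1, OF this] show ?thesis
    using that by (meson Suc_lessD less_trans_Suc)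
qed

lemma nat_discrete_ivt:
  fixes a :: "nat \<Rightarrow> nat"
  assumes "a 0 \<le> m" "m \<le> a t" "\<And>n. n < t \<Longrightarrow> a (Suc n) \<le> Suc (a n)"
  shows "\<exists>j\<le>t. a j = m"
  using assms
proof (induction t)
  case (Suc t)
  show ?case
  proof (cases "m \<le> a t")
    case True
    with Suc obtain j where "j \<le> t" "a j = m" by auto
    then show ?thesis by (intro exI[of _ j]) auto
  next
    case False
    moreover have "a (Suc t) \<le> Suc (a t)" using Suc.prems(3) by simp
    ultimately have "a (Suc t) = m" using Suc.prems(2) by linarith
    then show ?thesis by blast
  qed
qed auto

lemma walk_shortcut:
  assumes steps: "\<And>x. x < n \<Longrightarrow> R (g x) (g (Suc x))" and ij: "i < j" "j \<le> n" "g i = g j"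
  obtains h where "h 0 = g 0" "h (n - (j - i)) = g n" "\<And>x. x < n - (j - i) \<Longrightarrow> R (h x) (h (Suc x))"
proof -
  define h where "h x = (if x \<le> i then g x else g (x + (j - i)))" for x
  have shifted: "h x = g (x + (j - i))" if "x \<ge> i" for x
    using that ij unfolding h_def by (cases "x = i") auto
  have "R (h x) (h (Suc x))" if x: "x < n - (j - i)" for x
  proof (cases "Suc x \<le> i")
    case True
    then show ?thesis using steps x ij unfolding h_def by auto
  next
    case False
    then show ?thesis using shifted[of x] shifted[of "Suc x"] steps[of "x + (j - i)"] x ij by simp
  qed
  moreover have "h (n - (j - i)) = g n" using shifted[of "n - (j - i)"] ij by simp
  ultimately show thesis using that[of h] unfolding h_def by simp
qed

text \<open>An edge of an acyclic graph cannot be bypassed: a shortest detour around it would have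
  distinct vertices and close up with the edge to a cycle.\<close>
lemma acyclic_no_detour:
  assumes sym: "\<And>x y. E x y \<Longrightarrow> E y x" and irrefl: "\<And>x. \<not> E x x"
    and acyclic: "\<nexists>cs. is_cycle E cs" and ab: "E a b"
    and f: "f 0 = a" "f n = b" "\<And>i. i < n \<Longrightarrow> E (f i) (f (Suc i)) \<and> {f i, f (Suc i)} \<noteq> {a, b}"
  shows False
proof -
  define F where "F x y \<longleftrightarrow> E x y \<and> {x, y} \<noteq> {a, b}" for x y
  define detour where "detour n \<longleftrightarrow> (\<exists>g. g 0 = a \<and> g n = b \<and> (\<forall>i<n. F (g i) (g (Suc i))))" for n
  have "detour n" unfolding detour_def F_def using f by blast
  define n0 where "n0 = (LEAST n. detour n)"
  obtain g where g: "g 0 = a" "g n0 = b" "\<And>i. i < n0 \<Longrightarrow> F (g i) (g (Suc i))"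
    using LeastI[of detour, OF \<open>detour n\<close>] unfolding n0_def detour_def by blast
  have no_repeat: False if ij: "i < j" "j \<le> n0" "g i = g j" for i j
  proof -
    obtain h where "h 0 = a" "h (n0 - (j - i)) = b" "\<And>x. x < n0 - (j - i) \<Longrightarrow> F (h x) (h (Suc x))"
      by (rule walk_shortcut[of n0 F g i j]) (use g ij in auto)
    then have "detour (n0 - (j - i))" unfolding detour_def by blast
    then have "n0 \<le> n0 - (j - i)" unfolding n0_def by (rule Least_le)
    then show False using ij by linarith
  qed
  have "inj_on g {..n0}"
    by (rule inj_onI) (metis atMost_iff linorder_neqE_nat no_repeat)
  have "n0 \<noteq> 0" using g ab irrefl by (cases n0) auto
  moreover have "n0 \<noteq> 1" using g(1,2) g(3)[of 0] unfolding F_def by auto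
  ultimately have "n0 \<ge> 2" by linarith
  have "is_cycle E (map g [0..<Suc n0])"
    unfolding is_cycle_def is_walk_def
  proof (intro conjI allI impI)
    show "distinct (map g [0..<Suc n0])"
      using \<open>inj_on g {..n0}\<close> by (simp add: distinct_map lessThan_Suc_atMost atLeast0LessThan del: upt_Suc)
    show "E (last (map g [0..<Suc n0])) (hd (map g [0..<Suc n0]))"
      using g(1,2) ab sym by (simp del: upt_Suc add: last_map hd_map)
    fix i assume "Suc i < length (map g [0..<Suc n0])"
    then show "E (map g [0..<Suc n0] ! i) (map g [0..<Suc n0] ! Suc i)"
      using g(3) unfolding F_def by (simp del: upt_Suc)
  qed (use \<open>n0 \<ge> 2\<close> in auto)
  then show False using acyclic by blast
qed

lemma path_edges_sym: "path_edges ps x y \<longleftrightarrow> path_edges ps y x"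
  unfolding path_edges_def by blast

lemma path_edges_in_set: "path_edges ps x y \<Longrightarrow> x \<in> set ps \<and> y \<in> set ps"
  unfolding path_edges_def by (auto dest: Suc_lessD)

lemma path_edges_nth_iff:
  assumes "distinct ps" "i < length ps" "j < length ps"
  shows "path_edges ps (ps ! i) (ps ! j) \<longleftrightarrow> Suc i = j \<or> Suc j = i"
  using assms unfolding path_edges_def by (auto simp: nth_eq_iff_index_eq dest: Suc_lessD)

lemma path_edges_imp_edge:
  assumes "is_walk E ps" "\<And>x y. E x y \<Longrightarrow> E y x" "path_edges ps x y"
  shows "E x y"
  using assms unfolding path_edges_def is_walk_def by blast

locale path_graph =
  fixes ps :: "'a list" and k :: nat
  assumes distinct_ps: "distinct ps" and length_ps: "length ps = Suc k"
begin

lemma nth_eq_iff: "i \<le> k \<Longrightarrow> j \<le> k \<Longrightarrow> ps ! i = ps ! j \<longleftrightarrow> i = j"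
  using distinct_ps length_ps by (simp add: nth_eq_iff_index_eq)

lemma path_edges_iff:
  assumes "i \<le> k" "j \<le> k"
  shows "path_edges ps (ps ! i) (ps ! j) \<longleftrightarrow> Suc i = j \<or> Suc j = i"
  using assms by (simp add: path_edges_nth_iff distinct_ps length_ps)

definition pos :: "'a \<Rightarrow> nat" where
  "pos x = the_inv_into {..k} ((!) ps) x"

lemma pos_nth: "i \<le> k \<Longrightarrow> pos (ps ! i) = i"
  unfolding pos_def using nth_eq_iff by (intro the_inv_into_f_f inj_onI) auto

lemma nth_pos: "x \<in> set ps \<Longrightarrow> pos x \<le> k \<and> ps ! pos x = x"
  using pos_nth length_ps by (auto simp: in_set_conv_nth less_Suc_eq_le)

definition mirror :: "'a \<Rightarrow> 'a" where
  "mirror x = ps ! (k - pos x)"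

lemma mirror_nth: "i \<le> k \<Longrightarrow> mirror (ps ! i) = ps ! (k - i)"
  unfolding mirror_def by (simp add: pos_nth)

lemma mirror_path_edges:
  assumes "path_edges ps x y"
  shows "path_edges ps (mirror x) (mirror y)"
proof -
  obtain i j where "i \<le> k" "j \<le> k" "x = ps ! i" "y = ps ! j"
    using assms nth_pos path_edges_in_set by metis
  with assms show ?thesis by (auto simp: mirror_nth path_edges_iff)
qed

lemma mirror_mirror: "x \<in> set ps \<Longrightarrow> mirror (mirror x) = x"
  using nth_pos[of x] mirror_nth[of "pos x"] mirror_nth[of "k - pos x"] by simp

end

locale path_exits_at_end = path_graph +
  fixes H :: "'a \<Rightarrow> 'a \<Rightarrow> bool"
  assumes path_edges_sub: "\<And>x y. path_edges ps x y \<Longrightarrow> H x y"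
    and exits_at_end: "\<And>i y. i < k \<Longrightarrow> H (ps ! i) y \<Longrightarrow> path_edges ps (ps ! i) y"
begin

definition escaping_walks :: "'a \<Rightarrow> nat \<Rightarrow> 'a list set" where
  "escaping_walks x l = walks H x l - walks (path_edges ps) x l"

lemma walks_count_diff_eq_card_escaping_walks:
  assumes "finite (walks H x l)"
  shows "int (walks_count H x l) - int (walks_count (path_edges ps) x l) = int (card (escaping_walks x l))"
proof -
  have "walks (path_edges ps) x l \<subseteq> walks H x l" by (rule walks_mono[OF path_edges_sub])
  with assms show ?thesis
    unfolding walks_count_eq_card_walks escaping_walks_def
    by (simp add: card_Diff_subset card_mono finite_subset of_nat_diff)
qed

text \<open>Before its first non-path step an escaping walk from the first vertex has reached the
  last vertex, moving one position at a time, so it has visited every vertex of the path.\<close>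
lemma escaping_walk_traverses_path:
  assumes ws: "ws \<in> escaping_walks (ps ! 0) l" and j: "j \<le> k"
  obtains t where "Suc t < length ws" "\<not> path_edges ps (ws ! t) (ws ! Suc t)"
    "\<And>n. n < t \<Longrightarrow> path_edges ps (ws ! n) (ws ! Suc n)"
    "\<And>n. n \<le> t \<Longrightarrow> ws ! n \<in> set ps" "\<exists>n\<le>t. ws ! n = ps ! j"
proof -
  have in_walks: "ws \<in> walks H (ps ! 0) l" and escapes: "\<not> is_walk (path_edges ps) ws"
    using ws unfolding escaping_walks_def walks_def by auto
  have "ws \<noteq> []" and start: "ws ! 0 = ps ! 0" and walk: "is_walk H ws"
    using walks_start[OF in_walks] in_walks unfolding walks_def by auto
  obtain t where t: "Suc t < length ws" "\<not> path_edges ps (ws ! t) (ws ! Suc t)"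
      and before: "\<And>n. n < t \<Longrightarrow> path_edges ps (ws ! n) (ws ! Suc n)"
    using first_step_outside[OF \<open>ws \<noteq> []\<close> escapes] by blast
  have on_path: "ws ! n \<in> set ps" if "n \<le> t" for n
  proof (cases n)
    case 0
    then show ?thesis using start length_ps by simp
  next
    case (Suc n')
    then have "path_edges ps (ws ! n') (ws ! n)" using before[of n'] that by simp
    then show ?thesis by (rule path_edges_in_set[THEN conjunct2])
  qed
  define a where "a n = pos (ws ! n)" for n
  have a: "a n \<le> k \<and> ws ! n = ps ! a n" if "n \<le> t" for n
    using nth_pos on_path[OF that] unfolding a_def by simp
  have "a 0 = 0" using start pos_nth unfolding a_def by simp
  moreover have "a t = k"
  proof (rule ccontr)
    assume "a t \<noteq> k"
    with a[of t] have "a t < k" by simp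
    moreover have "H (ws ! t) (ws ! Suc t)" using walk t(1) unfolding is_walk_def by simp
    ultimately have "path_edges ps (ws ! t) (ws ! Suc t)" using exits_at_end a[of t] by simp
    with t(2) show False ..
  qed
  moreover have "a (Suc n) \<le> Suc (a n)" if "n < t" for n
  proof -
    have "path_edges ps (ps ! a n) (ps ! a (Suc n))"
      using before[OF that] a[of n] a[of "Suc n"] that by simp
    then have "Suc (a n) = a (Suc n) \<or> Suc (a (Suc n)) = a n"
      using path_edges_iff a[of n] a[of "Suc n"] that by simp
    then show ?thesis by auto
  qed
  ultimately obtain n where "n \<le> t" "a n = j" using nat_discrete_ivt[of a j t] j by auto
  then have "\<exists>n\<le>t. ws ! n = ps ! j" using a by blast
  with t before on_path show thesis by (rule that)
qed

end

locale even_path_exits_at_end = path_exits_at_end +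
  fixes m :: nat
  assumes k_eq: "k = 2 * m" and m_pos: "0 < m"
begin

lemma mirror_eq_middle_iff:
  assumes "i \<le> k"
  shows "mirror (ps ! i) = ps ! m \<longleftrightarrow> i = m"
  using assms k_eq mirror_nth[of i] nth_eq_iff[of "k - i" m] by auto

definition first_middle_visit :: "'a list \<Rightarrow> nat" where
  "first_middle_visit ws = (LEAST n. ws ! n = ps ! m)"

text \<open>Up to the first visit of the middle vertex an escaping walk stays on the path, and the
  mirror image of that part ends at the middle vertex again, so the result is still a walk.\<close>
definition reflect :: "'a list \<Rightarrow> 'a list" where
  "reflect ws = map mirror (take (first_middle_visit ws) ws) @ drop (first_middle_visit ws) ws"

lemma escaping_walk_first_middle_visit:
  assumes "ws \<in> escaping_walks (ps ! 0) l"
  defines "s \<equiv> first_middle_visit ws"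
  shows "0 < s" "s < length ws" "ws ! s = ps ! m"
    "\<And>n. n < s \<Longrightarrow> ws ! n \<in> set ps \<and> ws ! n \<noteq> ps ! m \<and> path_edges ps (ws ! n) (ws ! Suc n)"
    "\<exists>t\<ge>s. Suc t < length ws \<and> \<not> path_edges ps (ws ! t) (ws ! Suc t)"
proof -
  have "m \<le> k" using k_eq by simp
  obtain t where t: "Suc t < length ws" "\<not> path_edges ps (ws ! t) (ws ! Suc t)"
      and before: "\<And>n. n < t \<Longrightarrow> path_edges ps (ws ! n) (ws ! Suc n)"
      and on_path: "\<And>n. n \<le> t \<Longrightarrow> ws ! n \<in> set ps"
      and "\<exists>n\<le>t. ws ! n = ps ! m"
    using escaping_walk_traverses_path[OF assms(1) \<open>m \<le> k\<close>] by blast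
  then obtain n where n: "n \<le> t" "ws ! n = ps ! m" by blast
  have "s \<le> n" unfolding s_def first_middle_visit_def using n(2) by (rule Least_le)
  have middle: "ws ! s = ps ! m" unfolding s_def first_middle_visit_def using n(2) by (rule LeastI)
  have "ws ! 0 = ps ! 0"
    using assms(1) unfolding escaping_walks_def by (meson DiffD1 walks_start)
  with middle nth_eq_iff[of 0 m] \<open>m \<le> k\<close> m_pos show "0 < s" by (cases s) auto
  show "ws ! s = ps ! m" by (fact middle)
  show "s < length ws" using \<open>s \<le> n\<close> n t(1) by linarith
  show "\<exists>t\<ge>s. Suc t < length ws \<and> \<not> path_edges ps (ws ! t) (ws ! Suc t)"
    using \<open>s \<le> n\<close> n t by (intro exI[of _ t]) auto
  fix n' assume "n' < s"
  then have "ws ! n' \<noteq> ps ! m"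
    unfolding s_def first_middle_visit_def by (rule not_less_Least)
  moreover have "n' < t" using \<open>n' < s\<close> \<open>s \<le> n\<close> n(1) by linarith
  ultimately show "ws ! n' \<in> set ps \<and> ws ! n' \<noteq> ps ! m \<and> path_edges ps (ws ! n') (ws ! Suc n')"
    using on_path before by simp
qed

lemma reflect_length_nth:
  assumes "ws \<in> escaping_walks (ps ! 0) l"
  shows "length (reflect ws) = length ws"
    and "n < length ws \<Longrightarrow>
      reflect ws ! n = (if n < first_middle_visit ws then mirror (ws ! n) else ws ! n)"
  using escaping_walk_first_middle_visit(2)[OF assms] unfolding reflect_def
  by (auto simp: nth_append min_def)

lemma first_middle_visit_reflect:
  assumes ws: "ws \<in> escaping_walks (ps ! 0) l"
  shows "first_middle_visit (reflect ws) = first_middle_visit ws"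
  unfolding first_middle_visit_def[of "reflect ws"]
proof (rule Least_equality)
  let ?s = "first_middle_visit ws"
  note visit = escaping_walk_first_middle_visit[OF ws]
  show "reflect ws ! ?s = ps ! m" using visit(2,3) reflect_length_nth(2)[OF ws] by simp
  fix n assume n: "reflect ws ! n = ps ! m"
  show "?s \<le> n"
  proof (rule ccontr)
    assume "\<not> ?s \<le> n"
    then have "n < ?s" by simp
    with visit(4) have "ws ! n \<in> set ps" "ws ! n \<noteq> ps ! m" by auto
    moreover have "mirror (ws ! n) = ps ! m"
      using n \<open>n < ?s\<close> visit(2) reflect_length_nth(2)[OF ws] by simp
    ultimately show False using nth_pos mirror_eq_middle_iff by metis
  qed
qed

lemma reflect_escaping_walk:
  assumes ws: "ws \<in> escaping_walks (ps ! 0) l"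
  shows "reflect ws \<in> escaping_walks (ps ! k) l"
proof -
  let ?s = "first_middle_visit ws"
  note visit = escaping_walk_first_middle_visit[OF ws]
  note len = reflect_length_nth(1)[OF ws] and nth = reflect_length_nth(2)[OF ws]
  have in_walks: "ws \<in> walks H (ps ! 0) l" using ws unfolding escaping_walks_def by simp
  have "ws \<noteq> []" and start: "ws ! 0 = ps ! 0" using walks_start[OF in_walks] by simp_all
  have walk: "is_walk H ws" and length: "length ws = Suc l"
    using in_walks unfolding walks_def by auto
  have "reflect ws ! 0 = ps ! k" using nth[of 0] \<open>ws \<noteq> []\<close> visit(1) start mirror_nth[of 0] by simp
  then have head: "hd (reflect ws) = ps ! k" using len length by (cases "reflect ws") auto
  have mirror_middle: "mirror (ps ! m) = ps ! m" using mirror_eq_middle_iff k_eq by simp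
  have step: "H (reflect ws ! n) (reflect ws ! Suc n)" if n: "Suc n < length ws" for n
  proof (cases "Suc n \<le> ?s")
    case True
    then have "path_edges ps (mirror (ws ! n)) (mirror (ws ! Suc n))"
      using visit(4) mirror_path_edges by simp
    moreover have "reflect ws ! Suc n = mirror (ws ! Suc n)"
      using True n nth visit(3) mirror_middle by (cases "Suc n = ?s") auto
    ultimately show ?thesis using True n nth path_edges_sub by simp
  next
    case False
    then show ?thesis using n nth walk unfolding is_walk_def by simp
  qed
  obtain t where t: "?s \<le> t" "Suc t < length ws" "\<not> path_edges ps (ws ! t) (ws ! Suc t)"
    using visit(5) by blast
  then have "\<not> path_edges ps (reflect ws ! t) (reflect ws ! Suc t)" using nth by simp
  then have "\<not> is_walk (path_edges ps) (reflect ws)"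
    using t(2) len unfolding is_walk_def by auto
  moreover have "is_walk H (reflect ws)"
    using step length len unfolding is_walk_def by auto
  ultimately show ?thesis
    using head len length unfolding escaping_walks_def walks_def by simp
qed

lemma inj_on_reflect: "inj_on reflect (escaping_walks (ps ! 0) l)"
proof (rule inj_onI)
  fix v w
  assume v: "v \<in> escaping_walks (ps ! 0) l" and w: "w \<in> escaping_walks (ps ! 0) l"
    and eq: "reflect v = reflect w"
  have visit: "first_middle_visit v = first_middle_visit w"
    using first_middle_visit_reflect[OF v] first_middle_visit_reflect[OF w] eq by simp
  have "length v = length w"
    using reflect_length_nth(1)[OF v] reflect_length_nth(1)[OF w] eq by simp
  then show "v = w"
  proof (rule nth_equalityI)
    fix n assume n: "n < length v"
    have "reflect v ! n = reflect w ! n" using eq by simp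
    then show "v ! n = w ! n"
      using n \<open>length v = length w\<close> visit reflect_length_nth(2)[OF v] reflect_length_nth(2)[OF w]
        escaping_walk_first_middle_visit(4)[OF v] escaping_walk_first_middle_visit(4)[OF w]
      by (metis mirror_mirror)
  qed
qed

theorem card_escaping_walks_le:
  assumes "finite (walks H (ps ! k) l)"
  shows "card (escaping_walks (ps ! 0) l) \<le> card (escaping_walks (ps ! k) l)"
proof (rule card_inj_on_le[OF inj_on_reflect])
  show "reflect ` escaping_walks (ps ! 0) l \<subseteq> escaping_walks (ps ! k) l"
    using reflect_escaping_walk by blast
  show "finite (escaping_walks (ps ! k) l)"
    using assms unfolding escaping_walks_def by simp
qed

end

lemma degree_two_neighbour:
  assumes "degree E x = 2" "E x a" "E x b" "a \<noteq> b" "E x y"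
  shows "y = a \<or> y = b"
  using assms unfolding degree_def card_2_iff' by auto

locale tree_bare_path =
  fixes V :: "'a set" and E :: "'a \<Rightarrow> 'a \<Rightarrow> bool" and ps :: "'a list" and k :: nat
  assumes tree: "is_tree V E" and length_ps: "length ps = Suc k" and k_pos: "k \<ge> 1"
    and path: "is_path E ps"
    and inner_degree: "\<And>i. 1 \<le> i \<Longrightarrow> i \<le> k - 1 \<Longrightarrow> degree E (ps ! i) = 2"
begin

sublocale path_graph ps k
  using path length_ps unfolding is_path_def by unfold_locales simp_all

lemma edge_sym: "E x y \<Longrightarrow> E y x"
  and edge_irrefl: "\<not> E x x"
  and acyclic: "\<nexists>cs. is_cycle E cs"
  using tree unfolding is_tree_def simple_graph_def by auto

lemma path_step: "i < k \<Longrightarrow> E (ps ! i) (ps ! Suc i)"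
  using path length_ps unfolding is_path_def is_walk_def by simp

lemma inner_vertex_exits:
  assumes i: "1 \<le> i" "i < k" and "E (ps ! i) y"
  shows "path_edges ps (ps ! i) y"
proof -
  have "E (ps ! i) (ps ! (i - 1))" using path_step[of "i - 1"] edge_sym i by simp
  moreover have "E (ps ! i) (ps ! Suc i)" using path_step i by simp
  moreover have "ps ! (i - 1) \<noteq> ps ! Suc i" using nth_eq_iff i by simp
  moreover have "degree E (ps ! i) = 2" using inner_degree i by simp
  ultimately have "y = ps ! (i - 1) \<or> y = ps ! Suc i"
    using degree_two_neighbour[of E "ps ! i" _ _ y] assms(3) by blast
  then show ?thesis using path_edges_iff[of i] i by auto
qed

text \<open>A chord from the first vertex to a later path vertex would bypass the first path edge.\<close>
lemma start_neighbour_on_path: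
  assumes j: "j \<le> k" and edge: "E (ps ! 0) (ps ! j)"
  shows "j = 1"
proof (rule ccontr)
  assume "j \<noteq> 1"
  moreover have "j \<noteq> 0" using edge edge_irrefl by (cases j) auto
  ultimately have "j \<ge> 2" by simp
  define f where "f n = (if n < j then ps ! Suc n else ps ! 0)" for n
  show False
  proof (rule acyclic_no_detour[OF edge_sym edge_irrefl acyclic])
    show "E (ps ! 1) (ps ! 0)" using path_step[of 0] edge_sym k_pos by simp
    show "f 0 = ps ! 1" "f j = ps ! 0" unfolding f_def using \<open>j \<ge> 2\<close> by simp_all
    fix n assume "n < j"
    have "f (Suc n) \<notin> {ps ! 1, ps ! 0} \<or> f n \<notin> {ps ! 1, ps ! 0}"
      unfolding f_def using \<open>j \<ge> 2\<close> \<open>n < j\<close> j nth_eq_iff by (cases "Suc n < j") auto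
    moreover have "E (f n) (f (Suc n))"
    proof (cases "Suc n < j")
      case True
      then show ?thesis unfolding f_def using j path_step[of "Suc n"] by simp
    next
      case False
      then have "Suc n = j" using \<open>n < j\<close> by simp
      then show ?thesis unfolding f_def using edge edge_sym by auto
    qed
    ultimately show "E (f n) (f (Suc n)) \<and> {f n, f (Suc n)} \<noteq> {ps ! 1, ps ! 0}"
      by auto
  qed
qed

text \<open>An edge from the first vertex into the component of the last vertex would bypass
  the last path edge.\<close>
lemma start_neighbour_in_end_component:
  assumes y: "y \<in> component V (delete_path_edges E ps) (ps ! k)" and edge: "E (ps ! 0) y"
  shows "path_edges ps (ps ! 0) y"
proof (rule ccontr)
  assume not_path: "\<not> path_edges ps (ps ! 0) y"
  obtain ws where ws: "is_walk (delete_path_edges E ps) ws" "hd ws = ps ! k" "last ws = y"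
    using y unfolding component_def by auto
  define L where "L = length ws - 1"
  have "ws \<noteq> []" using ws(1) unfolding is_walk_def by simp
  then have ws_ends: "ws ! 0 = ps ! k" "ws ! L = y"
    using ws unfolding L_def by (simp_all add: hd_conv_nth last_conv_nth)
  have ws_steps: "E (ws ! n) (ws ! Suc n) \<and> \<not> path_edges ps (ws ! n) (ws ! Suc n)" if "n < L" for n
    using ws(1) that unfolding L_def is_walk_def delete_path_edges_def by auto
  have last_edge: "path_edges ps (ps ! k) (ps ! (k - 1))"
    using path_edges_iff k_pos by simp
  have avoids: "{a, b} \<noteq> {ps ! k, ps ! (k - 1)}" if "\<not> path_edges ps a b" for a b
    using that last_edge path_edges_sym[of ps "ps ! k" "ps ! (k - 1)"] by (auto simp: doubleton_eq_iff)
  define f where "f n = (if n \<le> L then ws ! n else ps ! (n - Suc L))" for n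
  show False
  proof (rule acyclic_no_detour[OF edge_sym edge_irrefl acyclic])
    show "E (ps ! k) (ps ! (k - 1))" using path_step[of "k - 1"] edge_sym k_pos by simp
    show "f 0 = ps ! k" "f (L + k) = ps ! (k - 1)"
      unfolding f_def using ws_ends k_pos by (simp_all add: Suc_diff_Suc)
    fix n assume n: "n < L + k"
    consider "n < L" | "n = L" | "L < n" by linarith
    then show "E (f n) (f (Suc n)) \<and> {f n, f (Suc n)} \<noteq> {ps ! k, ps ! (k - 1)}"
    proof cases
      case 1
      then show ?thesis unfolding f_def using ws_steps avoids by simp
    next
      case 2
      have "\<not> path_edges ps y (ps ! 0)" using not_path path_edges_sym[of ps y] by simp
      then show ?thesis unfolding f_def using 2 ws_ends edge edge_sym avoids by simp
    next
      case 3
      define q where "q = n - Suc L"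
      have q: "Suc q < k" "n = q + Suc L" using n 3 unfolding q_def by auto
      have "ps ! k \<noteq> ps ! q" "ps ! k \<noteq> ps ! Suc q" using q(1) nth_eq_iff by auto
      then show ?thesis unfolding f_def using q path_step[of q] by auto
    qed
  qed
qed

theorem exits_at_end_of_induced:
  "path_exits_at_end ps k (induced E (component V (delete_path_edges E ps) (ps ! k) \<union> set ps))"
proof
  fix x y
  assume xy: "path_edges ps x y"
  have "is_walk E ps" using path unfolding is_path_def by simp
  then have "E x y" using edge_sym xy by (rule path_edges_imp_edge)
  then show "induced E (component V (delete_path_edges E ps) (ps ! k) \<union> set ps) x y"
    using path_edges_in_set[OF xy] unfolding induced_def by blast
next
  fix i y
  assume i: "i < k" and "induced E (component V (delete_path_edges E ps) (ps ! k) \<union> set ps) (ps ! i) y"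
  then have edge: "E (ps ! i) y" and y: "y \<in> component V (delete_path_edges E ps) (ps ! k) \<union> set ps"
    unfolding induced_def by auto
  show "path_edges ps (ps ! i) y"
  proof (cases "i = 0")
    case False
    then show ?thesis using inner_vertex_exits i edge by simp
  next
    case True
    show ?thesis
    proof (cases "y \<in> set ps")
      case True
      then obtain j where "j \<le> k" "y = ps ! j" using nth_pos by metis
      then show ?thesis
        using start_neighbour_on_path path_edges_iff edge \<open>i = 0\<close> by auto
    next
      case False
      then show ?thesis using start_neighbour_in_end_component y edge \<open>i = 0\<close> by simp
    qed
  qed
qed

end

theorem lemma1:
  fixes V :: "'a set" and E :: "'a \<Rightarrow> 'a \<Rightarrow> bool" and ps :: "'a list" and k :: nat
  assumes tree: "is_tree V E"
    and len: "length ps = Suc k" and k1: "k \<ge> 1"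
    and path: "is_path E ps"
    and deg: "\<And>i. 1 \<le> i \<Longrightarrow> i \<le> k - 1 \<Longrightarrow> degree E (ps ! i) = 2"
    and B: "B = component V (delete_path_edges E ps) (ps ! k)"
    and keven: "even k"
    and l1: "l \<ge> 1"
  shows "int (walks_count (induced E (B \<union> set ps)) (ps ! 0) l) - int (walks_count (path_edges ps) (ps ! 0) l)
      \<le> int (walks_count (induced E (B \<union> set ps)) (ps ! k) l) - int (walks_count (path_edges ps) (ps ! k) l)"
proof -
  let ?H = "induced E (B \<union> set ps)"
  interpret tree_bare_path V E ps k
    using tree len k1 path deg by unfold_locales
  interpret path_exits_at_end ps k ?H
    using exits_at_end_of_induced B by simp
  interpret even_path_exits_at_end ps k ?H "k div 2"
    using keven k1 by unfold_locales auto
  have "finite (walks ?H x l)" for x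
    using tree unfolding is_tree_def simple_graph_def induced_def
    by (intro finite_walks[of V]) auto
  then show ?thesis
    using walks_count_diff_eq_card_escaping_walks card_escaping_walks_le by simp
qed

end
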